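(* Let $H$ be a real Hilbert space, $A:D(A)\subset H\to H$ a linear, self-adjoint, positive, unbounded operator with compact inverse, eigenvalues $0<\lambda_1\le\lambda_2\le\dots$ and orthonormal eigenbasis $\{e_n\}$, $H^s:=D(A^{s/2})$, $\alpha\in[0,1)$, and $f:H^\alpha\to H^{-\alpha}$ with $\|f(u)\|_{H^{-\alpha}}\le C$ and $\|f(u_1)-f(u_2)\|_{H^{-\alpha}}\le L\|u_1-u_2\|_{H^\alpha}$ for all $u,u_1,u_2\in H^\alpha$. Let $g\in H^{-\alpha}$ be such that the set of equilibria of $\partial_t u+Au-f(u)=g$ is finite; let $S(t)$ be its solution semigroup on $H$ and $\mathcal{A}$ its global attractor. Let $N\in\mathbb{N}$ satisfy $L<\lambda_{N+1}^{1-\alpha}$ and let $P_N$ be the orthogonal projector onto $\mathrm{span}\{e_1,\dots,e_N\}$. Let $F:H\to\mathbb{R}$ be continuous, $\tau>0$, $k\in\mathbb{N}$, such that $F(k,u):=(F(u),F(S(\tau)u),\dots,F(S((k-1)\tau)u))$ is injective on $\mathcal{A}$; set $\bar{\mathcal{A}}:=F(k,\mathcal{A})\subset\mathbb{R}^k$, $\Theta(\xi):=S(k\tau)\big(F(k,\cdot)|_{\mathcal{A}}\big)^{-1}(\xi)$ for $\xi\in\bar{\mathcal{A}}$, and let $\Theta_N:\mathbb{R}^k\to P_NH$ be any continuous extension of $\xi\mapsto P_N\Theta(\xi)$ from $\bar{\mathcal{A}}$. Let $u:\mathbb{R}\to\mathcal{A}$ be a complete trajectory on the attractor. Then there exists $K_0$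 such that for every $K>K_0$ there is $\beta>0$ (independent of $u$ and $v$) such that every solution $v$ of $$\partial_t v+Av-f(v)+K\Big(P_Nv(t)-\Theta_N\big(F(u(t-k\tau)),\dots,F(u(t-\tau))\big)\Big)=g,\qquad t\ge0,$$ with $v(0)\in H$ satisfies $\|v(t)-u(t)\|_H\le\|v(0)-u(0)\|_He^{-\beta t}$ for all $t\ge0$.
   Context: A complete trajectory on $\mathcal{A}$ is a map $u:\mathbb{R}\to\mathcal{A}$ with $S(t)u(s)=u(t+s)$ for $s\in\mathbb{R}$, $t\ge0$. The global attractor $\mathcal{A}$ of the (dissipative) solution semigroup is compact, so $F(k,\cdot)$ is a homeomorphism from $\mathcal{A}$ onto $\bar{\mathcal{A}}$ and $\Theta$ is continuous; a continuous extension $\Theta_N$ exists by the Tietze extension theorem. *)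

theory Defs
  imports "HOL-Analysis.Analysis"
begin

text \<open>Spectral setting: e is an orthonormal basis of H consisting of eigenvectors of A,
  A (e n) = lam n *R e n (indices shifted by one: e 0 = e_1, lam 0 = lambda_1).\<close>

definition orthonormal_basis :: "(nat \<Rightarrow> 'a::{real_inner,complete_space}) \<Rightarrow> bool" where
  "orthonormal_basis e \<longleftrightarrow> (\<forall>m n. inner (e m) (e n) = (if m = n then 1 else 0))
     \<and> (\<forall>u. (\<lambda>n. inner u (e n) *\<^sub>R e n) sums u)"

definition Hs :: "(nat \<Rightarrow> real) \<Rightarrow> (nat \<Rightarrow> 'a::real_inner) \<Rightarrow> real \<Rightarrow> 'a set" where
  "Hs lam e s = {u. summable (\<lambda>n. lam n powr s * (inner u (e n))\<^sup>2)}"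

definition Hs_norm :: "(nat \<Rightarrow> real) \<Rightarrow> (nat \<Rightarrow> 'a::real_inner) \<Rightarrow> real \<Rightarrow> 'a \<Rightarrow> real" where
  "Hs_norm lam e s u = sqrt (\<Sum>n. lam n powr s * (inner u (e n))\<^sup>2)"

text \<open>Negative-order space H^{-s}, s \<ge> 0, represented by coefficient sequences
  c n = <w, e n> (the completion of H w.r.t. the H^{-s} norm).\<close>
definition Hneg :: "(nat \<Rightarrow> real) \<Rightarrow> real \<Rightarrow> (nat \<Rightarrow> real) set" where
  "Hneg lam s = {c. summable (\<lambda>n. lam n powr (- s) * (c n)\<^sup>2)}"

definition Hneg_norm :: "(nat \<Rightarrow> real) \<Rightarrow> real \<Rightarrow> (nat \<Rightarrow> real) \<Rightarrow> real" where
  "Hneg_norm lam s c = sqrt (\<Sum>n. lam n powr (- s) * (c n)\<^sup>2)"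

definition PN :: "(nat \<Rightarrow> 'a::real_inner) \<Rightarrow> nat \<Rightarrow> 'a \<Rightarrow> 'a" where
  "PN e N u = (\<Sum>n<N. inner u (e n) *\<^sub>R e n)"

text \<open>Weak (Galerkin/coordinatewise) solution on [0,\<infinity>) of
  d/dt v + A v = h(t), where h(t) \<in> H^{-\<alpha>} is given by coefficients h t n:
  v continuous into H, v(t) \<in> H^\<alpha> for t > 0, and every coordinate satisfies
  the integrated equation.\<close>
definition weak_sol ::
  "(nat \<Rightarrow> real) \<Rightarrow> (nat \<Rightarrow> 'a::real_inner) \<Rightarrow> real \<Rightarrow> (real \<Rightarrow> nat \<Rightarrow> real) \<Rightarrow> (real \<Rightarrow> 'a) \<Rightarrow> bool" where
  "weak_sol lam e \<alpha> h v \<longleftrightarrow>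
     continuous_on {0..} v \<and> (\<forall>t>0. v t \<in> Hs lam e \<alpha>) \<and>
     (\<forall>n. \<forall>t\<ge>0. ((\<lambda>s. - lam n * inner (v s) (e n) + h s n) has_integral
                    (inner (v t) (e n) - inner (v 0) (e n))) {0..t})"

definition sol_eq ::
  "(nat \<Rightarrow> real) \<Rightarrow> (nat \<Rightarrow> 'a::real_inner) \<Rightarrow> real \<Rightarrow> ('a \<Rightarrow> nat \<Rightarrow> real) \<Rightarrow> (nat \<Rightarrow> real) \<Rightarrow> (real \<Rightarrow> 'a) \<Rightarrow> bool" where
  "sol_eq lam e \<alpha> f g v \<longleftrightarrow> weak_sol lam e \<alpha> (\<lambda>s n. f (v s) n + g n) v"

definition equilibria ::
  "(nat \<Rightarrow> real) \<Rightarrow> (nat \<Rightarrow> 'a::real_inner) \<Rightarrow> real \<Rightarrow> ('a \<Rightarrow> nat \<Rightarrow> real) \<Rightarrow> (nat \<Rightarrow> real) \<Rightarrow> 'a set" where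
  "equilibria lam e \<alpha> f g = {u \<in> Hs lam e \<alpha>. \<forall>n. lam n * inner u (e n) - f u n = g n}"

definition solution_semigroup ::
  "(nat \<Rightarrow> real) \<Rightarrow> (nat \<Rightarrow> 'a::real_inner) \<Rightarrow> real \<Rightarrow> ('a \<Rightarrow> nat \<Rightarrow> real) \<Rightarrow> (nat \<Rightarrow> real)
     \<Rightarrow> (real \<Rightarrow> 'a \<Rightarrow> 'a) \<Rightarrow> bool" where
  "solution_semigroup lam e \<alpha> f g S \<longleftrightarrow>
     (\<forall>u0. S 0 u0 = u0 \<and> sol_eq lam e \<alpha> f g (\<lambda>t. S t u0))"

definition global_attractor :: "(real \<Rightarrow> 'a::metric_space \<Rightarrow> 'a) \<Rightarrow> 'a set \<Rightarrow> bool" where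
  "global_attractor S \<A> \<longleftrightarrow> compact \<A> \<and> \<A> \<noteq> {} \<and> (\<forall>t\<ge>0. S t ` \<A> = \<A>) \<and>
     (\<forall>B. bounded B \<longrightarrow> (\<forall>\<epsilon>>0. \<exists>T. \<forall>t\<ge>T. \<forall>x\<in>B. infdist (S t x) \<A> < \<epsilon>))"

definition complete_trajectory :: "(real \<Rightarrow> 'a \<Rightarrow> 'a) \<Rightarrow> 'a set \<Rightarrow> (real \<Rightarrow> 'a) \<Rightarrow> bool" where
  "complete_trajectory S \<A> u \<longleftrightarrow> (\<forall>s. u s \<in> \<A>) \<and> (\<forall>s. \<forall>t\<ge>0. S t (u s) = u (t + s))"

text \<open>R^k is represented by the vectors in nat \<Rightarrow> real vanishing from index k on
  (product topology = Euclidean topology there).\<close>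
definition Rk :: "nat \<Rightarrow> (nat \<Rightarrow> real) set" where
  "Rk k = {\<xi>. \<forall>j\<ge>k. \<xi> j = 0}"

definition Fk :: "('a \<Rightarrow> real) \<Rightarrow> (real \<Rightarrow> 'a \<Rightarrow> 'a) \<Rightarrow> real \<Rightarrow> nat \<Rightarrow> 'a \<Rightarrow> nat \<Rightarrow> real" where
  "Fk F S \<tau> k u = (\<lambda>j. if j < k then F (S (real j * \<tau>) u) else 0)"

end

theory Submission
  imports Defs
begin

text \<open>Along a complete trajectory u the delayed measurements F(u(t - k\<tau>)), ..., F(u(t - \<tau>))
  form F(k, u(t - k\<tau>)), so \<Theta>_N maps them exactly to P_N u(t), and the difference w = v - u
  solves w' + A w + K P_N w = f(v) - f(u) =: \<phi>, where \<Sum> \<lambda>_n^(-\<alpha>) \<phi>_n^2 \<le> L^2 \<Sum> \<lambda>_n^\<alpha> w_n^2.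
  Summing the weighted AM-GM inequality 2 w_n \<phi>_n \<le> L \<lambda>_n^\<alpha> w_n^2 + \<lambda>_n^(-\<alpha>) \<phi>_n^2 / L over
  the modes shows that |w|^2 decays at rate 2\<beta> as soon as \<lambda>_n + K [n \<le> N] - L \<lambda>_n^\<alpha> \<ge> \<beta>
  for every n: for the high modes this is the spectral gap L < \<lambda>_(N+1)^(1-\<alpha>), for the low
  modes it holds once K > L \<lambda>_(N+1)^\<alpha>. Weak solutions satisfy only integrated coordinate
  equations, so the mode energies are computed with a product rule for primitives of bounded
  functions, and the sum over the modes is controlled by dominated convergence.\<close>

section \<open>Integrals of bounded functions\<close>

lemma has_integral_primitive_subinterval:
  fixes a \<psi> :: "real \<Rightarrow> real"
  assumes prim: "\<And>x. x \<in> {p..q} \<Longrightarrow> (\<psi> has_integral a x - a p) {p..x}"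
    and "p \<le> y" "y \<le> z" "z \<le> q"
  shows "(\<psi> has_integral a z - a y) {y..z}"
proof -
  have z: "z \<in> {p..q}" and y: "y \<in> {p..q}" using assms(2-4) by auto
  have "\<psi> integrable_on {y..z}"
    using integrable_on_subinterval[OF has_integral_integrable[OF prim[OF z]]] assms(2) by simp
  then obtain i where i: "(\<psi> has_integral i) {y..z}" by blast
  have "(\<psi> has_integral (a y - a p) + i) {p..z}"
    using has_integral_combine[OF assms(2,3) prim[OF y] i] .
  then have "a z - a p = (a y - a p) + i"
    by (rule has_integral_unique[OF prim[OF z]])
  then show ?thesis using i by simp
qed

lemma primitive_continuous_on:
  fixes a \<psi> :: "real \<Rightarrow> real"
  assumes prim: "\<And>x. x \<in> {p..q} \<Longrightarrow> (\<psi> has_integral a x - a p) {p..x}"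
  shows "continuous_on {p..q} a"
proof (cases "p \<le> q")
  case True
  then have "\<psi> integrable_on {p..q}" using prim[of q] by auto
  then have "continuous_on {p..q} (\<lambda>x. a p + integral {p..x} \<psi>)"
    by (intro continuous_intros indefinite_integral_continuous_1)
  moreover have "a p + integral {p..x} \<psi> = a x" if "x \<in> {p..q}" for x
    using prim[OF that] by (simp add: integral_unique)
  ultimately show ?thesis by (rule continuous_on_eq)
qed simp

lemma integrable_continuous_mult_bounded:
  fixes g \<psi> :: "real \<Rightarrow> real"
  assumes g: "continuous_on {p..q} g" and \<psi>: "\<psi> integrable_on {p..q}"
    and \<psi>_bdd: "\<And>s. s \<in> {p..q} \<Longrightarrow> \<bar>\<psi> s\<bar> \<le> B"
  shows "(\<lambda>s. g s * \<psi> s) integrable_on {p..q}"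
proof -
  obtain M where M: "\<And>s. s \<in> {p..q} \<Longrightarrow> \<bar>g s\<bar> \<le> M"
    using compact_imp_bounded[OF compact_continuous_image[OF g compact_Icc]]
    by (metis bounded_real imageI)
  have "g \<in> borel_measurable (lebesgue_on {p..q})"
    by (rule continuous_imp_measurable_on_sets_lebesgue[OF g]) auto
  moreover have "\<psi> \<in> borel_measurable (lebesgue_on {p..q})"
    by (rule integrable_imp_measurable[OF \<psi>])
  ultimately have product_measurable: "(\<lambda>s. g s * \<psi> s) \<in> borel_measurable (lebesgue_on {p..q})"
    by measurable
  show ?thesis
  proof (rule measurable_bounded_by_integrable_imp_integrable_real[OF product_measurable])
    show "(\<lambda>s. M * B) integrable_on {p..q}" by (rule integrable_const_ivl)
    show "\<bar>g s * \<psi> s\<bar> \<le> M * B" if "s \<in> {p..q}" for s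
      using M[OF that] \<psi>_bdd[OF that] by (simp add: abs_mult mult_mono')
  qed auto
qed

lemma product_of_primitives_increment_le:
  fixes a c \<psi> \<phi> :: "real \<Rightarrow> real"
  assumes "y \<le> z"
    and a: "\<And>x. x \<in> {y..z} \<Longrightarrow> (\<psi> has_integral a x - a y) {y..x}"
    and c: "\<And>x. x \<in> {y..z} \<Longrightarrow> (\<phi> has_integral c x - c y) {y..x}"
    and \<psi>_bdd: "\<And>s. s \<in> {y..z} \<Longrightarrow> \<bar>\<psi> s\<bar> \<le> B"
    and \<phi>_bdd: "\<And>s. s \<in> {y..z} \<Longrightarrow> \<bar>\<phi> s\<bar> \<le> B"
    and close: "\<And>s. s \<in> {y..z} \<Longrightarrow> \<bar>a s - a x\<bar> \<le> \<eta> / 2 \<and> \<bar>c s - c x\<bar> \<le> \<eta> / 2"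
  shows "\<bar>a z * c z - a y * c y - integral {y..z} (\<lambda>s. c s * \<psi> s + a s * \<phi> s)\<bar>
           \<le> 2 * B * \<eta> * (z - y)"
proof -
  have y: "y \<in> {y..z}" and z: "z \<in> {y..z}" using \<open>y \<le> z\<close> by auto
  have "0 \<le> B" using \<psi>_bdd[OF y] by linarith
  have "0 \<le> \<eta>" using close[OF y] by linarith
  have a_cont: "continuous_on {y..z} a" and c_cont: "continuous_on {y..z} c"
    by (rule primitive_continuous_on, fact a, rule primitive_continuous_on, fact c)
  have products_integrable: "(\<lambda>s. g s * \<psi> s + h s * \<phi> s) integrable_on {y..z}"
    if "continuous_on {y..z} g" "continuous_on {y..z} h" for g h
    using that a[OF z] c[OF z] \<psi>_bdd \<phi>_bdd
    by (intro integrable_add integrable_continuous_mult_bounded[where B=B]) auto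
  have "((\<lambda>s. c z * \<psi> s + a y * \<phi> s - (c s * \<psi> s + a s * \<phi> s)) has_integral
      c z * (a z - a y) + a y * (c z - c y) - integral {y..z} (\<lambda>s. c s * \<psi> s + a s * \<phi> s)) {y..z}"
    by (intro has_integral_diff has_integral_mult_right a[OF z] c[OF z] has_integral_add
        integrable_integral products_integrable c_cont a_cont)
  then have "((\<lambda>s. (c z - c s) * \<psi> s + (a y - a s) * \<phi> s) has_integral
      a z * c z - a y * c y - integral {y..z} (\<lambda>s. c s * \<psi> s + a s * \<phi> s)) {y..z}"
    by (simp add: algebra_simps)
  moreover have "\<bar>(c z - c s) * \<psi> s + (a y - a s) * \<phi> s\<bar> \<le> 2 * B * \<eta>" if s: "s \<in> {y..z}" for s
  proof -
    have "\<bar>c z - c s\<bar> \<le> \<eta>" "\<bar>a y - a s\<bar> \<le> \<eta>"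
      using close[OF s] close[OF z] close[OF y] by arith+
    then have "\<bar>(c z - c s) * \<psi> s\<bar> \<le> \<eta> * B" "\<bar>(a y - a s) * \<phi> s\<bar> \<le> \<eta> * B"
      using \<psi>_bdd[OF s] \<phi>_bdd[OF s] unfolding abs_mult by (auto intro: mult_mono')
    then show ?thesis
      using abs_triangle_ineq[of "(c z - c s) * \<psi> s" "(a y - a s) * \<phi> s"]
      by (simp add: algebra_simps)
  qed
  ultimately have "norm (a z * c z - a y * c y - integral {y..z} (\<lambda>s. c s * \<psi> s + a s * \<phi> s))
      \<le> 2 * B * \<eta> * Henstock_Kurzweil_Integration.content {y..z}"
    using \<open>0 \<le> B\<close> \<open>0 \<le> \<eta>\<close> by (intro has_integral_bound_real[where S="{}"]) auto
  then show ?thesis using \<open>y \<le> z\<close> by simp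
qed

lemma constant_on_if_increments_small:
  fixes D :: "real \<Rightarrow> real"
  assumes small: "\<And>x \<epsilon>. x \<in> {p..q} \<Longrightarrow> 0 < \<epsilon> \<Longrightarrow>
      \<exists>d>0. \<forall>y\<in>{p..q}. \<bar>y - x\<bar> < d \<longrightarrow> \<bar>D y - D x\<bar> \<le> \<epsilon> * \<bar>y - x\<bar>"
    and "x \<in> {p..q}" "y \<in> {p..q}"
  shows "D x = D y"
proof -
  have "(D has_derivative (\<lambda>_. 0)) (at x within {p..q})" if "x \<in> {p..q}" for x
    unfolding has_derivative_within_alt using small[OF that] by simp
  then obtain k where "\<And>x. x \<in> {p..q} \<Longrightarrow> D x = k"
    using has_derivative_zero_constant[of "{p..q}" D] by auto
  then show ?thesis using assms(2,3) by simp
qed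

text \<open>Neither primitive need be differentiable. Instead, D x = a x c x - integral {p..x} h has
  increments that are o(z - y) by continuity of a and c, so D is constant.\<close>

lemma has_integral_product_of_primitives:
  fixes a c \<psi> \<phi> :: "real \<Rightarrow> real"
  assumes "p \<le> q"
    and a: "\<And>x. x \<in> {p..q} \<Longrightarrow> (\<psi> has_integral a x - a p) {p..x}"
    and c: "\<And>x. x \<in> {p..q} \<Longrightarrow> (\<phi> has_integral c x - c p) {p..x}"
    and \<psi>_bdd: "\<And>s. s \<in> {p..q} \<Longrightarrow> \<bar>\<psi> s\<bar> \<le> B"
    and \<phi>_bdd: "\<And>s. s \<in> {p..q} \<Longrightarrow> \<bar>\<phi> s\<bar> \<le> B"
  shows "((\<lambda>s. c s * \<psi> s + a s * \<phi> s) has_integral a q * c q - a p * c p) {p..q}"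
proof -
  define h where "h = (\<lambda>s. c s * \<psi> s + a s * \<phi> s)"
  define D where "D x = a x * c x - integral {p..x} h" for x
  have "0 \<le> B" using \<psi>_bdd[of p] \<open>p \<le> q\<close> by auto
  have a_cont: "continuous_on {p..q} a" and c_cont: "continuous_on {p..q} c"
    by (rule primitive_continuous_on, fact a, rule primitive_continuous_on, fact c)
  have h_int: "h integrable_on {p..q}"
    unfolding h_def using a[of q] c[of q] \<psi>_bdd \<phi>_bdd a_cont c_cont \<open>p \<le> q\<close>
    by (intro integrable_add integrable_continuous_mult_bounded[where B=B]) auto
  have increment_bound: "\<bar>D z - D y\<bar> \<le> 2 * B * \<eta> * (z - y)"
    if yz: "p \<le> y" "y \<le> z" "z \<le> q"
      and close: "\<And>s. s \<in> {y..z} \<Longrightarrow> \<bar>a s - a x\<bar> \<le> \<eta> / 2 \<and> \<bar>c s - c x\<bar> \<le> \<eta> / 2" for x y z \<eta>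
  proof -
    have "integral {p..y} h + integral {y..z} h = integral {p..z} h"
      using yz by (intro Henstock_Kurzweil_Integration.integral_combine integrable_on_subinterval[OF h_int]) auto
    then have "\<bar>D z - D y\<bar> = \<bar>a z * c z - a y * c y - integral {y..z} h\<bar>" by (simp add: D_def)
    also have "\<dots> \<le> 2 * B * \<eta> * (z - y)"
      unfolding h_def using yz \<psi>_bdd \<phi>_bdd close
      by (intro product_of_primitives_increment_le has_integral_primitive_subinterval[OF a]
          has_integral_primitive_subinterval[OF c]) auto
    finally show ?thesis .
  qed
  have "D q = D p"
  proof (rule constant_on_if_increments_small[where D=D])
    fix x \<epsilon> :: real assume x: "x \<in> {p..q}" and "0 < \<epsilon>"
    define \<eta> where "\<eta> = \<epsilon> / (2 * (B + 1))"
    have \<eta>: "\<eta> > 0" "2 * B * \<eta> \<le> \<epsilon>"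
      using \<open>0 < \<epsilon>\<close> \<open>0 \<le> B\<close> by (auto simp: \<eta>_def field_simps)
    obtain d1 where "d1 > 0" and d1: "\<And>s. s \<in> {p..q} \<Longrightarrow> dist s x < d1 \<Longrightarrow> dist (a s) (a x) < \<eta> / 2"
      using a_cont x \<eta> unfolding continuous_on_iff by (metis half_gt_zero)
    obtain d2 where "d2 > 0" and d2: "\<And>s. s \<in> {p..q} \<Longrightarrow> dist s x < d2 \<Longrightarrow> dist (c s) (c x) < \<eta> / 2"
      using c_cont x \<eta> unfolding continuous_on_iff by (metis half_gt_zero)
    have "\<bar>D y - D x\<bar> \<le> \<epsilon> * \<bar>y - x\<bar>" if y: "y \<in> {p..q}" "\<bar>y - x\<bar> < min d1 d2" for y
    proof -
      have "\<bar>D (max x y) - D (min x y)\<bar> \<le> 2 * B * \<eta> * (max x y - min x y)"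
      proof (rule increment_bound)
        fix s assume "s \<in> {min x y..max x y}"
        then have "s \<in> {p..q}" "dist s x < d1" "dist s x < d2"
          using x y by (auto simp: dist_real_def)
        then show "\<bar>a s - a x\<bar> \<le> \<eta> / 2 \<and> \<bar>c s - c x\<bar> \<le> \<eta> / 2"
          using d1 d2 by (fastforce simp: dist_real_def)
      qed (use x y in auto)
      also have "\<dots> \<le> \<epsilon> * \<bar>y - x\<bar>"
        using \<eta> by (auto simp: max_def min_def intro: mult_right_mono)
      finally show ?thesis by (cases "x \<le> y") (auto simp: max_def min_def abs_minus_commute)
    qed
    then show "\<exists>d>0. \<forall>y\<in>{p..q}. \<bar>y - x\<bar> < d \<longrightarrow> \<bar>D y - D x\<bar> \<le> \<epsilon> * \<bar>y - x\<bar>"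
      using \<open>d1 > 0\<close> \<open>d2 > 0\<close> by (intro exI[of _ "min d1 d2"]) auto
  qed (use \<open>p \<le> q\<close> in auto)
  then have "integral {p..q} h = a q * c q - a p * c p" by (simp add: D_def)
  then have "(h has_integral a q * c q - a p * c p) {p..q}"
    using h_int by (metis has_integral_integral)
  then show ?thesis by (simp add: h_def)
qed

lemma has_integral_exp_weighted_square:
  fixes a \<psi> :: "real \<Rightarrow> real" and c :: real
  assumes "p \<le> q"
    and a: "\<And>x. x \<in> {p..q} \<Longrightarrow> (\<psi> has_integral a x - a p) {p..x}"
    and \<psi>_bdd: "\<And>s. s \<in> {p..q} \<Longrightarrow> \<bar>\<psi> s\<bar> \<le> B"
  shows "((\<lambda>s. exp (c * s) * (c * (a s)\<^sup>2 + 2 * a s * \<psi> s)) has_integral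
           exp (c * q) * (a q)\<^sup>2 - exp (c * p) * (a p)\<^sup>2) {p..q}"
proof -
  obtain R where R: "\<And>s. s \<in> {p..q} \<Longrightarrow> \<bar>a s\<bar> \<le> R"
    using compact_imp_bounded[OF compact_continuous_image[OF primitive_continuous_on[OF a] compact_Icc]]
    by (metis bounded_real imageI)
  have "continuous_on {p..q} (\<lambda>s. c * exp (c * s))" by (intro continuous_intros)
  then obtain E where E: "\<And>s. s \<in> {p..q} \<Longrightarrow> \<bar>c * exp (c * s)\<bar> \<le> E"
    using compact_imp_bounded[OF compact_continuous_image[OF _ compact_Icc]]
    by (metis bounded_real imageI)
  have square: "((\<lambda>s. 2 * a s * \<psi> s) has_integral (a x)\<^sup>2 - (a p)\<^sup>2) {p..x}" if "x \<in> {p..q}" for x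
  proof -
    have "((\<lambda>s. a s * \<psi> s + a s * \<psi> s) has_integral a x * a x - a p * a p) {p..x}"
      using that by (intro has_integral_product_of_primitives[where B=B]) (use a \<psi>_bdd in auto)
    then show ?thesis by (simp add: power2_eq_square mult.assoc flip: mult_2)
  qed
  have exponential: "((\<lambda>s. c * exp (c * s)) has_integral exp (c * x) - exp (c * p)) {p..x}"
    if "x \<in> {p..q}" for x
    using that
    by (intro fundamental_theorem_of_calculus)
       (auto intro!: derivative_eq_intros simp flip: has_real_derivative_iff_has_vector_derivative)
  have "2 * \<bar>a s\<bar> * \<bar>\<psi> s\<bar> \<le> 2 * R * B" if "s \<in> {p..q}" for s
    using R[OF that] \<psi>_bdd[OF that] by (intro mult_mono) auto
  then have "((\<lambda>s. exp (c * s) * (2 * a s * \<psi> s) + (a s)\<^sup>2 * (c * exp (c * s))) has_integral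
      (a q)\<^sup>2 * exp (c * q) - (a p)\<^sup>2 * exp (c * p)) {p..q}"
    using \<open>p \<le> q\<close> square exponential E
    by (intro has_integral_product_of_primitives[where B="max (2 * R * B) E"])
       (auto simp: abs_mult intro: le_max_iff_disj[THEN iffD2])
  moreover have "(\<lambda>s. exp (c * s) * (2 * a s * \<psi> s) + (a s)\<^sup>2 * (c * exp (c * s)))
      = (\<lambda>s. exp (c * s) * (c * (a s)\<^sup>2 + 2 * a s * \<psi> s))"
    by (simp add: fun_eq_iff algebra_simps)
  ultimately show ?thesis by (simp add: mult.commute)
qed

lemma integrable_max_0_bounded_above:
  fixes f :: "real \<Rightarrow> real"
  assumes "f integrable_on {p..q}" and "\<And>s. s \<in> {p<..q} \<Longrightarrow> f s \<le> B"
  shows "(\<lambda>s. max 0 (f s)) integrable_on {p..q}"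
proof -
  have "(\<lambda>s. max 0 (f s)) \<in> borel_measurable (lebesgue_on {p..q})"
    using integrable_imp_measurable[OF assms(1)] by measurable
  then show ?thesis
  proof (rule measurable_bounded_by_integrable_imp_integrable_real)
    show "(\<lambda>_. max 0 B + \<bar>f p\<bar>) integrable_on {p..q}" by (rule integrable_const_ivl)
    show "\<bar>max 0 (f s)\<bar> \<le> max 0 B + \<bar>f p\<bar>" if "s \<in> {p..q}" for s
      using that assms(2)[of s] by (cases "s = p") auto
  qed auto
qed

lemma integrals_limit_nonpos:
  fixes I U :: "nat \<Rightarrow> real \<Rightarrow> real" and X :: "nat \<Rightarrow> real"
  assumes int: "\<And>M. (I M has_integral X M) {p..q}"
    and upper: "\<And>M s. s \<in> {p<..q} \<Longrightarrow> I M s \<le> B"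
    and dominated: "\<And>M s. s \<in> {p<..q} \<Longrightarrow> I M s \<le> U M s"
    and vanishing: "\<And>s. s \<in> {p<..q} \<Longrightarrow> (\<lambda>M. U M s) \<longlonglongrightarrow> 0"
    and "X \<longlonglongrightarrow> x"
  shows "x \<le> 0"
proof -
  define P where "P M s = (if s \<in> {p<..q} then max 0 (I M s) else 0)" for M s
  have P_bdd: "\<bar>P M s\<bar> \<le> max 0 B" for M s
    using upper[of s M] by (auto simp: P_def)
  have P_int: "P M integrable_on {p..q}" for M
    by (rule integrable_spike_finite[of "{p}", OF _ _
          integrable_max_0_bounded_above[OF has_integral_integrable[OF int] upper]])
       (auto simp: P_def)
  have P_lim: "(\<lambda>M. P M s) \<longlonglongrightarrow> 0" if "s \<in> {p..q}" for s
  proof (cases "s \<in> {p<..q}")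
    case True
    have "(\<lambda>M. max 0 (U M s)) \<longlonglongrightarrow> max 0 0"
      by (intro tendsto_max tendsto_const vanishing[OF True])
    moreover have "0 \<le> P M s" "P M s \<le> max 0 (U M s)" for M
      using dominated[OF True, of M] True by (auto simp: P_def)
    ultimately show ?thesis
      using tendsto_sandwich[of "\<lambda>_. 0" "\<lambda>M. P M s" sequentially "\<lambda>M. max 0 (U M s)" 0]
      by simp
  next
    case False
    then have "P M s = 0" for M by (auto simp: P_def)
    then show ?thesis by simp
  qed
  have "(\<lambda>M. integral {p..q} (P M)) \<longlonglongrightarrow> integral {p..q} (\<lambda>_. 0)"
    by (rule dominated_convergence(2)[OF P_int integrable_const_ivl])
       (use P_bdd P_lim in \<open>simp_all only: real_norm_def\<close>)
  moreover have "X M \<le> integral {p..q} (P M)" for M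
  proof (rule has_integral_le)
    show "((\<lambda>s. if s = p then 0 else I M s) has_integral X M) {p..q}"
      by (rule has_integral_spike_finite[of "{p}", OF _ _ int]) auto
    show "(P M has_integral integral {p..q} (P M)) {p..q}"
      using P_int by (rule integrable_integral)
  qed (auto simp: P_def)
  ultimately have "x \<le> integral {p..q} (\<lambda>_. 0)"
    by (intro tendsto_le[OF trivial_limit_sequentially _ \<open>X \<longlonglongrightarrow> x\<close>] always_eventually) auto
  then show ?thesis by simp
qed

section \<open>Coefficient spaces\<close>

lemma sum_lessThan_le_sums:
  fixes f :: "nat \<Rightarrow> real"
  assumes "f sums s" and "\<And>n. 0 \<le> f n"
  shows "(\<Sum>n<M. f n) \<le> s"
  using sum_le_suminf[OF sums_summable[OF assms(1)], of "{..<M}"] assms(2)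
  by (simp add: sums_unique[OF assms(1)])

lemma orthonormal_basis_inner:
  assumes "orthonormal_basis e"
  shows "inner (e m) (e n) = (if m = n then 1 else 0)"
  using assms by (simp add: orthonormal_basis_def)

lemma orthonormal_basis_norm:
  assumes "orthonormal_basis e"
  shows "norm (e n) = 1"
  using orthonormal_basis_inner[OF assms, of n n] by (simp add: norm_eq_sqrt_inner)

lemma parseval:
  assumes "orthonormal_basis e"
  shows "(\<lambda>n. (inner u (e n))\<^sup>2) sums (norm u)\<^sup>2"
proof -
  have "(\<lambda>M. \<Sum>n<M. inner u (e n) *\<^sub>R e n) \<longlonglongrightarrow> u"
    using assms by (simp add: orthonormal_basis_def sums_def)
  then have "(\<lambda>M. inner (\<Sum>n<M. inner u (e n) *\<^sub>R e n) u) \<longlonglongrightarrow> inner u u"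
    by (intro tendsto_inner tendsto_const)
  moreover have "inner (\<Sum>n<M. inner u (e n) *\<^sub>R e n) u = (\<Sum>n<M. (inner u (e n))\<^sup>2)" for M
    by (simp add: inner_sum_left power2_eq_square inner_commute[of "e _" u])
  ultimately show ?thesis by (simp add: sums_def power2_norm_eq_inner)
qed

lemma inner_PN_basis:
  assumes "orthonormal_basis e"
  shows "inner (PN e N x) (e n) = (if n < N then inner x (e n) else 0)"
proof -
  have "inner (PN e N x) (e n) = (\<Sum>m<N. inner x (e m) * (if m = n then 1 else 0))"
    by (simp add: PN_def inner_sum_left orthonormal_basis_inner[OF assms])
  also have "\<dots> = (\<Sum>m<N. if m = n then inner x (e n) else 0)"
    by (rule sum.cong) auto
  finally show ?thesis by (simp add: sum.delta')
qed

lemma Hs_norm_nonneg: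
  assumes "u \<in> Hs lam e s"
  shows "0 \<le> Hs_norm lam e s u"
proof -
  have "0 \<le> (\<Sum>n. lam n powr s * (inner u (e n))\<^sup>2)"
    by (rule suminf_nonneg) (use assms in \<open>auto simp: Hs_def\<close>)
  then show ?thesis by (simp add: Hs_norm_def)
qed

lemma Hs_norm_sums:
  assumes "u \<in> Hs lam e s"
  shows "(\<lambda>n. lam n powr s * (inner u (e n))\<^sup>2) sums (Hs_norm lam e s u)\<^sup>2"
  using assms Hs_norm_nonneg[OF assms] by (simp add: Hs_def Hs_norm_def summable_sums)

lemma Hneg_norm_nonneg:
  assumes "c \<in> Hneg lam s"
  shows "0 \<le> Hneg_norm lam s c"
proof -
  have "0 \<le> (\<Sum>n. lam n powr (- s) * (c n)\<^sup>2)"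
    by (rule suminf_nonneg) (use assms in \<open>auto simp: Hneg_def\<close>)
  then show ?thesis by (simp add: Hneg_norm_def)
qed

lemma Hneg_norm_sums:
  assumes "c \<in> Hneg lam s"
  shows "(\<lambda>n. lam n powr (- s) * (c n)\<^sup>2) sums (Hneg_norm lam s c)\<^sup>2"
  using assms Hneg_norm_nonneg[OF assms] by (simp add: Hneg_def Hneg_norm_def summable_sums)

lemma summable_weighted_diff_square:
  fixes w x y :: "nat \<Rightarrow> real"
  assumes x: "summable (\<lambda>n. w n * (x n)\<^sup>2)" and y: "summable (\<lambda>n. w n * (y n)\<^sup>2)"
    and w: "\<And>n. 0 \<le> w n"
  shows "summable (\<lambda>n. w n * (x n - y n)\<^sup>2)"
    and "(\<Sum>n. w n * (x n - y n)\<^sup>2) \<le> 2 * (\<Sum>n. w n * (x n)\<^sup>2) + 2 * (\<Sum>n. w n * (y n)\<^sup>2)"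
proof -
  have bound: "w n * (x n - y n)\<^sup>2 \<le> 2 * (w n * (x n)\<^sup>2) + 2 * (w n * (y n)\<^sup>2)" for n
  proof -
    have "(x n - y n)\<^sup>2 \<le> 2 * (x n)\<^sup>2 + 2 * (y n)\<^sup>2"
      using zero_le_power2[of "x n + y n"] by (simp add: power2_eq_square algebra_simps)
    then have "w n * (x n - y n)\<^sup>2 \<le> w n * (2 * (x n)\<^sup>2 + 2 * (y n)\<^sup>2)"
      by (rule mult_left_mono[OF _ w])
    then show ?thesis by (simp add: algebra_simps)
  qed
  have sum: "summable (\<lambda>n. 2 * (w n * (x n)\<^sup>2) + 2 * (w n * (y n)\<^sup>2))"
    by (intro summable_add summable_mult x y)
  show diff: "summable (\<lambda>n. w n * (x n - y n)\<^sup>2)"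
    by (rule summable_comparison_test[OF _ sum]) (use bound w in auto)
  have "(\<Sum>n. w n * (x n - y n)\<^sup>2) \<le> (\<Sum>n. 2 * (w n * (x n)\<^sup>2) + 2 * (w n * (y n)\<^sup>2))"
    by (rule suminf_le[OF bound diff sum])
  also have "\<dots> = 2 * (\<Sum>n. w n * (x n)\<^sup>2) + 2 * (\<Sum>n. w n * (y n)\<^sup>2)"
    using x y by (simp add: suminf_add[symmetric] suminf_mult summable_mult)
  finally show "(\<Sum>n. w n * (x n - y n)\<^sup>2) \<le> 2 * (\<Sum>n. w n * (x n)\<^sup>2) + 2 * (\<Sum>n. w n * (y n)\<^sup>2)" .
qed

lemma Hs_diff:
  assumes "u \<in> Hs lam e s" "v \<in> Hs lam e s"
  shows "u - v \<in> Hs lam e s"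
  using summable_weighted_diff_square(1)[of "\<lambda>n. lam n powr s" "\<lambda>n. inner u (e n)" "\<lambda>n. inner v (e n)"]
    assms by (simp add: Hs_def inner_diff_left)

lemma Hneg_diff:
  assumes c1: "c1 \<in> Hneg lam s" "Hneg_norm lam s c1 \<le> C"
    and c2: "c2 \<in> Hneg lam s" "Hneg_norm lam s c2 \<le> C"
  shows "(\<lambda>n. c1 n - c2 n) \<in> Hneg lam s" and "Hneg_norm lam s (\<lambda>n. c1 n - c2 n) \<le> 2 * C"
proof -
  note diff = summable_weighted_diff_square[of "\<lambda>n. lam n powr (- s)" c1 c2]
  show "(\<lambda>n. c1 n - c2 n) \<in> Hneg lam s"
    using diff(1) c1 c2 by (simp add: Hneg_def)
  have "(\<Sum>n. lam n powr (- s) * (c1 n - c2 n)\<^sup>2) \<le> 2 * C\<^sup>2 + 2 * C\<^sup>2"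
    using diff(2) c1 c2 sqrt_le_D[of "\<Sum>n. lam n powr (- s) * (c1 n)\<^sup>2" C]
      sqrt_le_D[of "\<Sum>n. lam n powr (- s) * (c2 n)\<^sup>2" C]
    by (fastforce simp: Hneg_def Hneg_norm_def)
  moreover have "0 \<le> C" using c1 Hneg_norm_nonneg[of c1 lam s] by linarith
  ultimately show "Hneg_norm lam s (\<lambda>n. c1 n - c2 n) \<le> 2 * C"
    unfolding Hneg_norm_def by (intro real_le_lsqrt) (auto simp: power2_eq_square)
qed

lemma Hneg_coeff_le:
  assumes "c \<in> Hneg lam s" "0 < lam n"
  shows "\<bar>c n\<bar> \<le> lam n powr (s / 2) * Hneg_norm lam s c"
proof -
  have "lam n powr (- s) * (c n)\<^sup>2 \<le> (\<Sum>m. lam m powr (- s) * (c m)\<^sup>2)"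
    using assms(1) sum_le_suminf[of "\<lambda>m. lam m powr (- s) * (c m)\<^sup>2" "{n}"]
    by (simp add: Hneg_def)
  also have "\<dots> = (Hneg_norm lam s c)\<^sup>2"
    using Hneg_norm_sums[OF assms(1)] by (simp add: sums_iff)
  finally have "lam n powr s * (lam n powr (- s) * (c n)\<^sup>2) \<le> lam n powr s * (Hneg_norm lam s c)\<^sup>2"
    by (rule mult_left_mono) simp
  moreover have "(lam n powr (s / 2))\<^sup>2 = lam n powr s"
    by (simp add: power2_eq_square flip: powr_add)
  ultimately have "(c n)\<^sup>2 \<le> (lam n powr (s / 2) * Hneg_norm lam s c)\<^sup>2"
    using assms(2) by (simp add: power_mult_distrib powr_minus field_simps)
  then show ?thesis
    using Hneg_norm_nonneg[OF assms(1)] by (simp add: abs_le_square_iff[symmetric])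
qed

lemma nonlinearity_difference_bounds:
  assumes f_maps: "\<forall>u\<in>Hs lam e \<alpha>. f u \<in> Hneg lam \<alpha>"
    and f_bdd: "\<forall>u\<in>Hs lam e \<alpha>. Hneg_norm lam \<alpha> (f u) \<le> C"
    and f_lip: "\<forall>u1\<in>Hs lam e \<alpha>. \<forall>u2\<in>Hs lam e \<alpha>.
                  Hneg_norm lam \<alpha> (\<lambda>n. f u1 n - f u2 n) \<le> L * Hs_norm lam e \<alpha> (u1 - u2)"
    and "L \<le> L'" and u1: "u1 \<in> Hs lam e \<alpha>" and u2: "u2 \<in> Hs lam e \<alpha>"
  shows "(\<lambda>n. f u1 n - f u2 n) \<in> Hneg lam \<alpha>"
    and "Hneg_norm lam \<alpha> (\<lambda>n. f u1 n - f u2 n) \<le> 2 * C"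
    and "Hneg_norm lam \<alpha> (\<lambda>n. f u1 n - f u2 n) \<le> L' * Hs_norm lam e \<alpha> (u1 - u2)"
proof -
  have "f u1 \<in> Hneg lam \<alpha>" "Hneg_norm lam \<alpha> (f u1) \<le> C"
    and "f u2 \<in> Hneg lam \<alpha>" "Hneg_norm lam \<alpha> (f u2) \<le> C"
    using f_maps f_bdd u1 u2 by auto
  then show "(\<lambda>n. f u1 n - f u2 n) \<in> Hneg lam \<alpha>"
    and "Hneg_norm lam \<alpha> (\<lambda>n. f u1 n - f u2 n) \<le> 2 * C"
    by (rule Hneg_diff)+
  have "Hneg_norm lam \<alpha> (\<lambda>n. f u1 n - f u2 n) \<le> L * Hs_norm lam e \<alpha> (u1 - u2)"
    using f_lip u1 u2 by blast
  also have "\<dots> \<le> L' * Hs_norm lam e \<alpha> (u1 - u2)"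
    using \<open>L \<le> L'\<close> Hs_norm_nonneg[OF Hs_diff[OF u1 u2]] by (rule mult_right_mono)
  finally show "Hneg_norm lam \<alpha> (\<lambda>n. f u1 n - f u2 n) \<le> L' * Hs_norm lam e \<alpha> (u1 - u2)" .
qed

section \<open>Energy decay\<close>

lemma two_mult_le_scaled_squares:
  fixes x y c :: real
  assumes "0 < c"
  shows "2 * x * y \<le> c * x\<^sup>2 + y\<^sup>2 / c"
proof -
  have "0 \<le> (c * x - y)\<^sup>2 / c" using assms by simp
  also have "\<dots> = c * x\<^sup>2 + y\<^sup>2 / c - 2 * x * y"
    using assms by (simp add: power2_eq_square field_simps)
  finally show ?thesis by simp
qed

lemma partial_energy_rate_le_tail:
  fixes e :: "nat \<Rightarrow> 'a::real_inner" and c \<mu> :: "nat \<Rightarrow> real"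
  assumes lam_pos: "\<And>n. 0 < lam n"
    and u: "u \<in> Hs lam e \<alpha>" and c: "c \<in> Hneg lam \<alpha>"
    and lip: "Hneg_norm lam \<alpha> c \<le> L * Hs_norm lam e \<alpha> u"
    and margin: "\<And>n. b \<le> \<mu> n - L * lam n powr \<alpha>" and "0 < L"
  shows "(\<Sum>n<M. (2 * b - 2 * \<mu> n) * (inner u (e n))\<^sup>2 + 2 * inner u (e n) * c n)
           \<le> L * ((Hs_norm lam e \<alpha> u)\<^sup>2 - (\<Sum>n<M. lam n powr \<alpha> * (inner u (e n))\<^sup>2))"
proof -
  define x where "x n = inner u (e n)" for n
  have termwise: "(2 * b - 2 * \<mu> n) * (x n)\<^sup>2 + 2 * x n * c n
      \<le> - L * (lam n powr \<alpha> * (x n)\<^sup>2) + lam n powr (- \<alpha>) * (c n)\<^sup>2 / L" for n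
  proof -
    have L_lam: "0 < L * lam n powr \<alpha>" using \<open>0 < L\<close> lam_pos[of n] by simp
    have "(2 * b - 2 * \<mu> n) * (x n)\<^sup>2 \<le> - 2 * (L * lam n powr \<alpha>) * (x n)\<^sup>2"
      using margin[of n] by (intro mult_right_mono) auto
    moreover have "2 * x n * c n \<le> L * lam n powr \<alpha> * (x n)\<^sup>2 + (c n)\<^sup>2 / (L * lam n powr \<alpha>)"
      by (rule two_mult_le_scaled_squares[OF L_lam])
    moreover have "(c n)\<^sup>2 / (L * lam n powr \<alpha>) = lam n powr (- \<alpha>) * (c n)\<^sup>2 / L"
      by (simp add: powr_minus field_simps)
    ultimately show ?thesis by (simp add: algebra_simps)
  qed
  have "(\<Sum>n<M. (2 * b - 2 * \<mu> n) * (x n)\<^sup>2 + 2 * x n * c n)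
      \<le> (\<Sum>n<M. - L * (lam n powr \<alpha> * (x n)\<^sup>2) + lam n powr (- \<alpha>) * (c n)\<^sup>2 / L)"
    by (intro sum_mono termwise)
  also have "\<dots> = - L * (\<Sum>n<M. lam n powr \<alpha> * (x n)\<^sup>2) + (\<Sum>n<M. lam n powr (- \<alpha>) * (c n)\<^sup>2) / L"
    unfolding sum.distrib by (simp add: sum_distrib_left sum_divide_distrib sum_negf)
  also have "(\<Sum>n<M. lam n powr (- \<alpha>) * (c n)\<^sup>2) \<le> (Hneg_norm lam \<alpha> c)\<^sup>2"
    using Hneg_norm_sums[OF c] by (rule sum_lessThan_le_sums) simp
  also have "\<dots> \<le> (L * Hs_norm lam e \<alpha> u)\<^sup>2"
    using lip Hneg_norm_nonneg[OF c] by (intro power_mono) auto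
  also have "\<dots> = L * (L * (Hs_norm lam e \<alpha> u)\<^sup>2)"
    by (simp add: power2_eq_square)
  finally show ?thesis
    using \<open>0 < L\<close> by (simp add: x_def divide_right_mono algebra_simps)
qed

lemma partial_energy_rate_le:
  fixes e :: "nat \<Rightarrow> 'a::{real_inner,complete_space}" and c \<mu> :: "nat \<Rightarrow> real"
  assumes basis: "orthonormal_basis e"
    and lam_pos: "\<And>n. 0 < lam n" and lam_min: "\<And>n. lam 0 \<le> lam n" and "\<alpha> \<le> 1"
    and \<mu>: "\<And>n. lam n \<le> \<mu> n" and c: "c \<in> Hneg lam \<alpha>" and "0 \<le> b"
  shows "(\<Sum>n<M. (2 * b - 2 * \<mu> n) * (inner u (e n))\<^sup>2 + 2 * inner u (e n) * c n)
           \<le> 2 * b * (norm u)\<^sup>2 + lam 0 powr (\<alpha> - 1) * (Hneg_norm lam \<alpha> c)\<^sup>2"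
proof -
  define x where "x n = inner u (e n)" for n
  have termwise: "(2 * b - 2 * \<mu> n) * (x n)\<^sup>2 + 2 * x n * c n
      \<le> 2 * b * (x n)\<^sup>2 + lam 0 powr (\<alpha> - 1) * (lam n powr (- \<alpha>) * (c n)\<^sup>2)" for n
  proof -
    have "(c n)\<^sup>2 / lam n = lam n powr (\<alpha> - 1) * (lam n powr (- \<alpha>) * (c n)\<^sup>2)"
      using lam_pos[of n] by (simp add: powr_minus powr_diff field_simps)
    also have "\<dots> \<le> lam 0 powr (\<alpha> - 1) * (lam n powr (- \<alpha>) * (c n)\<^sup>2)"
      using \<open>\<alpha> \<le> 1\<close> lam_pos lam_min by (intro mult_right_mono powr_mono2') auto
    finally have "(c n)\<^sup>2 / lam n \<le> \<dots>" .
    moreover have "2 * x n * c n \<le> lam n * (x n)\<^sup>2 + (c n)\<^sup>2 / lam n"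
      by (rule two_mult_le_scaled_squares[OF lam_pos])
    moreover have "(2 * b - 2 * \<mu> n) * (x n)\<^sup>2 \<le> (2 * b - lam n) * (x n)\<^sup>2"
      using \<mu>[of n] lam_pos[of n] by (intro mult_right_mono) auto
    ultimately show ?thesis by (simp add: algebra_simps)
  qed
  have "(\<Sum>n<M. (2 * b - 2 * \<mu> n) * (x n)\<^sup>2 + 2 * x n * c n)
      \<le> (\<Sum>n<M. 2 * b * (x n)\<^sup>2 + lam 0 powr (\<alpha> - 1) * (lam n powr (- \<alpha>) * (c n)\<^sup>2))"
    by (intro sum_mono termwise)
  also have "\<dots> = 2 * b * (\<Sum>n<M. (x n)\<^sup>2) + lam 0 powr (\<alpha> - 1) * (\<Sum>n<M. lam n powr (- \<alpha>) * (c n)\<^sup>2)"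
    by (simp add: sum.distrib sum_distrib_left)
  also have "\<dots> \<le> 2 * b * (norm u)\<^sup>2 + lam 0 powr (\<alpha> - 1) * (Hneg_norm lam \<alpha> c)\<^sup>2"
  proof (intro add_mono mult_left_mono)
    show "(\<Sum>n<M. (x n)\<^sup>2) \<le> (norm u)\<^sup>2"
      using parseval[OF basis, of u] unfolding x_def by (rule sum_lessThan_le_sums) simp
    show "(\<Sum>n<M. lam n powr (- \<alpha>) * (c n)\<^sup>2) \<le> (Hneg_norm lam \<alpha> c)\<^sup>2"
      using Hneg_norm_sums[OF c] by (rule sum_lessThan_le_sums) simp
  qed (use \<open>0 \<le> b\<close> in auto)
  finally show ?thesis by (simp add: x_def)
qed

lemma weak_sol_bounded_on:
  assumes "weak_sol lam e \<alpha> h w"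
  obtains R where "\<And>s. s \<in> {0..t} \<Longrightarrow> norm (w s) \<le> R"
proof -
  have "continuous_on {0..t} w"
    using assms by (auto simp: weak_sol_def elim: continuous_on_subset)
  then show ?thesis
    using that compact_imp_bounded[OF compact_continuous_image[OF _ compact_Icc]]
    by (metis bounded_iff imageI)
qed

lemma weak_sol_coordinate_energy:
  fixes e :: "nat \<Rightarrow> 'a::{real_inner,complete_space}" and w :: "real \<Rightarrow> 'a"
  assumes basis: "orthonormal_basis e" and lam_pos: "\<And>n. 0 < lam n"
    and sol: "weak_sol lam e \<alpha> (\<lambda>s n. \<phi> s n - \<kappa> n * inner (w s) (e n)) w"
    and \<phi>_in: "\<And>s. 0 < s \<Longrightarrow> \<phi> s \<in> Hneg lam \<alpha>"
    and \<phi>_bdd: "\<And>s. 0 < s \<Longrightarrow> Hneg_norm lam \<alpha> (\<phi> s) \<le> C"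
    and "0 \<le> t"
  shows "((\<lambda>s. exp (c * s) * ((c - 2 * (lam n + \<kappa> n)) * (inner (w s) (e n))\<^sup>2
                                + 2 * inner (w s) (e n) * \<phi> s n))
          has_integral exp (c * t) * (inner (w t) (e n))\<^sup>2 - (inner (w 0) (e n))\<^sup>2) {0..t}"
proof -
  define a where "a s = inner (w s) (e n)" for s
  \<comment> \<open>\<phi> is controlled only for s > 0, so the integrand is redefined at s = 0\<close>
  define \<psi> where "\<psi> s = (if s = 0 then 0 else \<phi> s n - (lam n + \<kappa> n) * a s)" for s
  obtain R where R: "\<And>s. s \<in> {0..t} \<Longrightarrow> norm (w s) \<le> R"
    using weak_sol_bounded_on[OF sol] by blast
  have \<psi>_prim: "(\<psi> has_integral a x - a 0) {0..x}" if "x \<in> {0..t}" for x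
  proof (rule has_integral_spike_finite[of "{0}"])
    show "((\<lambda>s. - lam n * inner (w s) (e n) + (\<phi> s n - \<kappa> n * inner (w s) (e n)))
        has_integral a x - a 0) {0..x}"
      using sol that by (simp add: weak_sol_def a_def)
  qed (auto simp: \<psi>_def a_def power2_eq_square algebra_simps)
  have "\<bar>\<psi> s\<bar> \<le> \<bar>lam n + \<kappa> n\<bar> * R + lam n powr (\<alpha> / 2) * C" if "s \<in> {0..t}" for s
  proof (cases "s = 0")
    case True
    have "0 \<le> R" using R[OF that] norm_ge_zero[of "w s"] by linarith
    moreover have "0 \<le> C" using \<phi>_bdd[of 1] Hneg_norm_nonneg[OF \<phi>_in[of 1]] by simp
    ultimately show ?thesis using True by (simp add: \<psi>_def)
  next
    case False
    have "\<bar>a s\<bar> \<le> R"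
      using Cauchy_Schwarz_ineq2[of "w s" "e n"] R[OF that]
      by (simp add: a_def orthonormal_basis_norm[OF basis])
    then have "\<bar>(lam n + \<kappa> n) * a s\<bar> \<le> \<bar>lam n + \<kappa> n\<bar> * R"
      by (simp add: abs_mult mult_left_mono)
    moreover have "0 < s" using False that by simp
    then have "\<bar>\<phi> s n\<bar> \<le> lam n powr (\<alpha> / 2) * Hneg_norm lam \<alpha> (\<phi> s)"
      by (rule Hneg_coeff_le[OF \<phi>_in lam_pos])
    moreover have "\<dots> \<le> lam n powr (\<alpha> / 2) * C"
      by (intro mult_left_mono \<phi>_bdd[OF \<open>0 < s\<close>]) simp
    ultimately have "\<bar>\<phi> s n - (lam n + \<kappa> n) * a s\<bar> \<le> \<bar>lam n + \<kappa> n\<bar> * R + lam n powr (\<alpha> / 2) * C"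
      using abs_triangle_ineq4[of "\<phi> s n" "(lam n + \<kappa> n) * a s"] by linarith
    then show ?thesis using False by (simp add: \<psi>_def)
  qed
  then have "((\<lambda>s. exp (c * s) * (c * (a s)\<^sup>2 + 2 * a s * \<psi> s)) has_integral
      exp (c * t) * (a t)\<^sup>2 - exp (c * 0) * (a 0)\<^sup>2) {0..t}"
    using \<open>0 \<le> t\<close> \<psi>_prim by (intro has_integral_exp_weighted_square) auto
  then have "((\<lambda>s. exp (c * s) * (c * (a s)\<^sup>2 + 2 * a s * \<psi> s)) has_integral
      exp (c * t) * (inner (w t) (e n))\<^sup>2 - (inner (w 0) (e n))\<^sup>2) {0..t}"
    by (simp add: a_def)
  then show ?thesis
    by (rule has_integral_spike_finite[of "{0}", rotated 2])
       (auto simp: \<psi>_def a_def power2_eq_square algebra_simps)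
qed

lemma weak_sol_exponential_decay:
  fixes e :: "nat \<Rightarrow> 'a::{real_inner,complete_space}" and w :: "real \<Rightarrow> 'a"
  assumes basis: "orthonormal_basis e"
    and lam_pos: "\<And>n. 0 < lam n" and lam_min: "\<And>n. lam 0 \<le> lam n" and "\<alpha> \<le> 1"
    and sol: "weak_sol lam e \<alpha> (\<lambda>s n. \<phi> s n - \<kappa> n * inner (w s) (e n)) w"
    and \<kappa>: "\<And>n. 0 \<le> \<kappa> n"
    and \<phi>_in: "\<And>s. 0 < s \<Longrightarrow> \<phi> s \<in> Hneg lam \<alpha>"
    and \<phi>_lip: "\<And>s. 0 < s \<Longrightarrow> Hneg_norm lam \<alpha> (\<phi> s) \<le> L * Hs_norm lam e \<alpha> (w s)"
    and \<phi>_bdd: "\<And>s. 0 < s \<Longrightarrow> Hneg_norm lam \<alpha> (\<phi> s) \<le> C"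
    and margin: "\<And>n. b \<le> lam n + \<kappa> n - L * lam n powr \<alpha>"
    and "0 < L" "0 < b" "0 \<le> t"
  shows "norm (w t) \<le> norm (w 0) * exp (- b * t)"
proof -
  define E where "E M s = (\<Sum>n<M. (inner (w s) (e n))\<^sup>2)" for M s
  define I where "I = (\<lambda>M s. exp (2 * b * s) * (\<Sum>n<M. (2 * b - 2 * (lam n + \<kappa> n))
    * (inner (w s) (e n))\<^sup>2 + 2 * inner (w s) (e n) * \<phi> s n))"
  define T where "T M s = (Hs_norm lam e \<alpha> (w s))\<^sup>2 - (\<Sum>n<M. lam n powr \<alpha> * (inner (w s) (e n))\<^sup>2)"
    for M s
  have w_Hs: "w s \<in> Hs lam e \<alpha>" if "0 < s" for s using sol that by (simp add: weak_sol_def)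
  obtain R where R: "\<And>s. s \<in> {0..t} \<Longrightarrow> norm (w s) \<le> R"
    using weak_sol_bounded_on[OF sol] by blast
  have "((\<lambda>s. \<Sum>n<M. exp (2 * b * s) * ((2 * b - 2 * (lam n + \<kappa> n)) * (inner (w s) (e n))\<^sup>2
      + 2 * inner (w s) (e n) * \<phi> s n)) has_integral
      (\<Sum>n<M. exp (2 * b * t) * (inner (w t) (e n))\<^sup>2 - (inner (w 0) (e n))\<^sup>2)) {0..t}" for M
    by (intro has_integral_sum finite_lessThan
        weak_sol_coordinate_energy[OF basis lam_pos sol \<phi>_in \<phi>_bdd \<open>0 \<le> t\<close>])
  then have "(I M has_integral exp (2 * b * t) * E M t - E M 0) {0..t}" for M
    by (simp add: I_def E_def sum_distrib_left sum_subtractf)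
  moreover have "I M s \<le> exp (2 * b * t) * (2 * b * R\<^sup>2 + lam 0 powr (\<alpha> - 1) * C\<^sup>2)"
    if s: "s \<in> {0<..t}" for M s
  proof -
    have "(\<Sum>n<M. (2 * b - 2 * (lam n + \<kappa> n)) * (inner (w s) (e n))\<^sup>2 + 2 * inner (w s) (e n) * \<phi> s n)
        \<le> 2 * b * (norm (w s))\<^sup>2 + lam 0 powr (\<alpha> - 1) * (Hneg_norm lam \<alpha> (\<phi> s))\<^sup>2"
      using s \<kappa> \<open>0 < b\<close>
      by (intro partial_energy_rate_le[OF basis lam_pos lam_min \<open>\<alpha> \<le> 1\<close> _ \<phi>_in]) auto
    also have "\<dots> \<le> 2 * b * R\<^sup>2 + lam 0 powr (\<alpha> - 1) * C\<^sup>2"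
      using R[of s] \<phi>_bdd[of s] Hneg_norm_nonneg[OF \<phi>_in[of s]] s \<open>0 < b\<close>
      by (intro add_mono mult_left_mono power_mono) auto
    finally have "I M s \<le> exp (2 * b * s) * (2 * b * R\<^sup>2 + lam 0 powr (\<alpha> - 1) * C\<^sup>2)"
      unfolding I_def by (rule mult_left_mono) simp
    also have "\<dots> \<le> exp (2 * b * t) * (2 * b * R\<^sup>2 + lam 0 powr (\<alpha> - 1) * C\<^sup>2)"
      using s \<open>0 < b\<close> by (intro mult_right_mono) auto
    finally show ?thesis .
  qed
  moreover have "I M s \<le> exp (2 * b * s) * (L * T M s)" if s: "s \<in> {0<..t}" for M s
    unfolding I_def T_def using s margin \<open>0 < L\<close>
    by (intro mult_left_mono partial_energy_rate_le_tail[OF lam_pos w_Hs \<phi>_in \<phi>_lip]) auto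
  moreover have "(\<lambda>M. exp (2 * b * s) * (L * T M s)) \<longlonglongrightarrow> 0" if "s \<in> {0<..t}" for s
  proof -
    have "(\<lambda>M. T M s) \<longlonglongrightarrow> (Hs_norm lam e \<alpha> (w s))\<^sup>2 - (Hs_norm lam e \<alpha> (w s))\<^sup>2"
      unfolding T_def using Hs_norm_sums[OF w_Hs] that
      by (intro tendsto_diff tendsto_const) (simp add: sums_def)
    then show ?thesis by (simp add: tendsto_mult_right_zero)
  qed
  moreover have "(\<lambda>M. exp (2 * b * t) * E M t - E M 0)
      \<longlonglongrightarrow> exp (2 * b * t) * (norm (w t))\<^sup>2 - (norm (w 0))\<^sup>2"
    using parseval[OF basis] by (intro tendsto_intros) (simp_all add: E_def sums_def)
  ultimately have "exp (2 * b * t) * (norm (w t))\<^sup>2 - (norm (w 0))\<^sup>2 \<le> 0"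
    by (rule integrals_limit_nonpos)
  then have "(norm (w t))\<^sup>2 \<le> (norm (w 0) * exp (- b * t))\<^sup>2"
    by (simp add: power_mult_distrib exp_minus field_simps flip: exp_of_nat_mult)
  then show ?thesis by (rule power2_le_imp_le) simp
qed

section \<open>Nudged trajectories\<close>

lemma weak_sol_cong:
  assumes "weak_sol lam e \<alpha> h v"
    and "\<And>s. 0 \<le> s \<Longrightarrow> v' s = v s" and "\<And>s n. 0 \<le> s \<Longrightarrow> h' s n = h s n"
  shows "weak_sol lam e \<alpha> h' v'"
proof -
  have "continuous_on {0..} v" using assms(1) by (simp add: weak_sol_def)
  then have "continuous_on {0..} v'"
    by (rule continuous_on_eq) (simp add: assms(2))
  moreover have "((\<lambda>s. - lam n * inner (v' s) (e n) + h' s n) has_integral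
      inner (v' t) (e n) - inner (v' 0) (e n)) {0..t}" if "0 \<le> t" for n t
  proof -
    have "((\<lambda>s. - lam n * inner (v s) (e n) + h s n) has_integral
        inner (v t) (e n) - inner (v 0) (e n)) {0..t}"
      using assms(1) that by (simp add: weak_sol_def)
    then show ?thesis
      using assms(2,3) that by (subst has_integral_cong) auto
  qed
  ultimately show ?thesis
    using assms(1,2) by (simp add: weak_sol_def)
qed

lemma weak_sol_diff:
  assumes "weak_sol lam e \<alpha> h1 v" and "weak_sol lam e \<alpha> h2 u"
  shows "weak_sol lam e \<alpha> (\<lambda>s n. h1 s n - h2 s n) (\<lambda>s. v s - u s)"
  unfolding weak_sol_def
proof (intro conjI allI impI)
  show "continuous_on {0..} (\<lambda>s. v s - u s)"
    using assms by (intro continuous_intros) (auto simp: weak_sol_def)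
  show "v t - u t \<in> Hs lam e \<alpha>" if "0 < t" for t
    using assms that by (intro Hs_diff) (auto simp: weak_sol_def)
  fix n and t :: real assume "0 \<le> t"
  then have "((\<lambda>s. (- lam n * inner (v s) (e n) + h1 s n) - (- lam n * inner (u s) (e n) + h2 s n))
      has_integral (inner (v t) (e n) - inner (v 0) (e n)) - (inner (u t) (e n) - inner (u 0) (e n))) {0..t}"
    using assms by (intro has_integral_diff) (auto simp: weak_sol_def)
  then show "((\<lambda>s. - lam n * inner (v s - u s) (e n) + (h1 s n - h2 s n)) has_integral
      inner (v t - u t) (e n) - inner (v 0 - u 0) (e n)) {0..t}"
    by (simp add: inner_diff_left algebra_simps)
qed

lemma complete_trajectory_weak_sol:
  assumes "solution_semigroup lam e \<alpha> f g S" and "complete_trajectory S \<A> u"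
  shows "weak_sol lam e \<alpha> (\<lambda>s n. f (u s) n + g n) u"
proof (rule weak_sol_cong)
  show "weak_sol lam e \<alpha> (\<lambda>s n. f (S s (u 0)) n + g n) (\<lambda>s. S s (u 0))"
    using assms(1) by (simp add: solution_semigroup_def sol_eq_def)
  show "u s = S s (u 0)" if "0 \<le> s" for s
    using assms(2) that by (simp add: complete_trajectory_def)
  then show "f (u s) n + g n = f (S s (u 0)) n + g n" if "0 \<le> s" for s n
    using that by presburger
qed

lemma delayed_observations_recover_projection:
  assumes u: "complete_trajectory S \<A> u" and inj: "inj_on (Fk F S \<tau> k) \<A>" and "0 \<le> \<tau>"
    and Theta: "\<forall>\<xi>\<in>Fk F S \<tau> k ` \<A>.
                  Theta \<xi> = PN e N (S (real k * \<tau>) (the_inv_into \<A> (Fk F S \<tau> k) \<xi>))"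
  shows "Theta (\<lambda>j. if j < k then F (u (s - real k * \<tau> + real j * \<tau>)) else 0) = PN e N (u s)"
proof -
  define x where "x = u (s - real k * \<tau>)"
  have "x \<in> \<A>" using u by (simp add: complete_trajectory_def x_def)
  have flow: "S r x = u (r + (s - real k * \<tau>))" if "0 \<le> r" for r
    using u that by (simp add: complete_trajectory_def x_def)
  have "(\<lambda>j. if j < k then F (u (s - real k * \<tau> + real j * \<tau>)) else 0) = Fk F S \<tau> k x"
    using flow \<open>0 \<le> \<tau>\<close> by (auto simp: Fk_def fun_eq_iff add.commute)
  moreover have "S (real k * \<tau>) x = u s" using flow \<open>0 \<le> \<tau>\<close> by simp
  ultimately show ?thesis
    using Theta \<open>x \<in> \<A>\<close> by (simp add: the_inv_into_f_f[OF inj])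
qed

lemma weak_sol_nudged_difference:
  assumes basis: "orthonormal_basis e"
    and v: "weak_sol lam e \<alpha> (\<lambda>s n. f (v s) n + g n - K * inner (PN e N (v s) - PN e N (u s)) (e n)) v"
    and u: "weak_sol lam e \<alpha> (\<lambda>s n. f (u s) n + g n) u"
  shows "weak_sol lam e \<alpha>
           (\<lambda>s n. (f (v s) n - f (u s) n) - (if n < N then K else 0) * inner (v s - u s) (e n))
           (\<lambda>s. v s - u s)"
proof (rule weak_sol_cong[OF weak_sol_diff[OF v u]])
  show "(f (v s) n - f (u s) n) - (if n < N then K else 0) * inner (v s - u s) (e n)
      = (f (v s) n + g n - K * inner (PN e N (v s) - PN e N (u s)) (e n)) - (f (u s) n + g n)" for s n
    by (simp add: inner_diff_left inner_PN_basis[OF basis] algebra_simps)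
qed simp

lemma nudging_margin:
  fixes lam :: "nat \<Rightarrow> real"
  assumes lam_pos: "\<And>n. 0 < lam n" and "mono lam" and "0 \<le> \<alpha>" "\<alpha> \<le> 1"
    and "0 \<le> L" "L < lam N powr (1 - \<alpha>)" and K: "L * lam N powr \<alpha> < K"
  shows "min (lam N powr \<alpha> * (lam N powr (1 - \<alpha>) - L)) (K - L * lam N powr \<alpha>)
           \<le> lam n + (if n < N then K else 0) - L * lam n powr \<alpha>"
proof (cases "n < N")
  case True
  then have "lam n powr \<alpha> \<le> lam N powr \<alpha>"
    using \<open>mono lam\<close> lam_pos \<open>0 \<le> \<alpha>\<close> by (intro powr_mono2) (auto simp: monoD less_imp_le)
  then have "L * lam n powr \<alpha> \<le> L * lam N powr \<alpha>"
    using \<open>0 \<le> L\<close> by (rule mult_left_mono)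
  then show ?thesis using True lam_pos[of n] by auto
next
  case False
  then have N_n: "lam N \<le> lam n" using \<open>mono lam\<close> by (simp add: monoD)
  have "lam N powr \<alpha> * (lam N powr (1 - \<alpha>) - L) \<le> lam n powr \<alpha> * (lam n powr (1 - \<alpha>) - L)"
    using N_n lam_pos[of N] assms(3-6) by (intro mult_mono powr_mono2 diff_right_mono) auto
  also have "\<dots> = lam n - L * lam n powr \<alpha>"
    using lam_pos[of n] by (simp add: algebra_simps flip: powr_add)
  finally show ?thesis using False by simp
qed

lemma nudging_rate:
  fixes lam :: "nat \<Rightarrow> real"
  assumes lam_pos: "\<And>n. 0 < lam n" and "mono lam" and "0 \<le> \<alpha>" "\<alpha> \<le> 1"
    and gap: "L < lam N powr (1 - \<alpha>)"
  obtains L' K0 :: real and \<beta> :: "real \<Rightarrow> real"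
  where "L \<le> L'" "0 < L'" "0 < K0"
    and "\<And>K. K0 < K \<Longrightarrow> 0 < \<beta> K"
    and "\<And>K n. K0 < K \<Longrightarrow> \<beta> K \<le> lam n + (if n < N then K else 0) - L' * lam n powr \<alpha>"
proof -
  have "max L 0 < lam N powr (1 - \<alpha>)" using gap lam_pos[of N] by simp
  \<comment> \<open>L' > 0 because the energy estimate divides by the Lipschitz constant\<close>
  then obtain L' where L': "max L 0 < L'" "L' < lam N powr (1 - \<alpha>)" using dense by blast
  define K0 where "K0 = L' * lam N powr \<alpha>"
  show ?thesis
  proof (rule that[of L' K0 "\<lambda>K. min (lam N powr \<alpha> * (lam N powr (1 - \<alpha>) - L')) (K - K0)"])
    show "L \<le> L'" "0 < L'" using L' by auto
    show "0 < K0" using L' lam_pos[of N] by (simp add: K0_def)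
    show "0 < min (lam N powr \<alpha> * (lam N powr (1 - \<alpha>) - L')) (K - K0)" if "K0 < K" for K
      using that L' lam_pos[of N] by simp
    show "min (lam N powr \<alpha> * (lam N powr (1 - \<alpha>) - L')) (K - K0)
        \<le> lam n + (if n < N then K else 0) - L' * lam n powr \<alpha>" if "K0 < K" for K n
      unfolding K0_def using L' that assms by (intro nudging_margin) (auto simp: K0_def)
  qed
qed

theorem proposition4p7:
  fixes e :: "nat \<Rightarrow> 'a::{real_inner,complete_space}"
    and lam :: "nat \<Rightarrow> real"
    and \<alpha> C L \<tau> :: real
    and f :: "'a \<Rightarrow> nat \<Rightarrow> real"
    and g :: "nat \<Rightarrow> real"
    and S :: "real \<Rightarrow> 'a \<Rightarrow> 'a"
    and \<A> :: "'a set"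
    and N k :: nat
    and F :: "'a \<Rightarrow> real"
    and ThetaN :: "(nat \<Rightarrow> real) \<Rightarrow> 'a"
  assumes basis: "orthonormal_basis e"
    and lam_pos: "lam 0 > 0" and lam_mono: "mono lam" and lam_inf: "filterlim lam at_top sequentially"
    and alpha: "0 \<le> \<alpha>" "\<alpha> < 1"
    and f_maps: "\<forall>u\<in>Hs lam e \<alpha>. f u \<in> Hneg lam \<alpha>"
    and f_bdd: "\<forall>u\<in>Hs lam e \<alpha>. Hneg_norm lam \<alpha> (f u) \<le> C"
    and f_lip: "\<forall>u1\<in>Hs lam e \<alpha>. \<forall>u2\<in>Hs lam e \<alpha>.
                  Hneg_norm lam \<alpha> (\<lambda>n. f u1 n - f u2 n) \<le> L * Hs_norm lam e \<alpha> (u1 - u2)"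
    and g_in: "g \<in> Hneg lam \<alpha>"
    and equil_fin: "finite (equilibria lam e \<alpha> f g)"
    and semigroup: "solution_semigroup lam e \<alpha> f g S"
    and attractor: "global_attractor S \<A>"
    and N_gap: "L < lam N powr (1 - \<alpha>)"
    and F_cont: "continuous_on UNIV F"
    and tau_pos: "\<tau> > 0"
    and F_inj: "inj_on (Fk F S \<tau> k) \<A>"
    and ThetaN_cont: "continuous_on (Rk k) ThetaN"
    and ThetaN_range: "\<forall>\<xi>\<in>Rk k. ThetaN \<xi> \<in> range (PN e N)"
    and ThetaN_ext: "\<forall>\<xi>\<in>Fk F S \<tau> k ` \<A>.
                       ThetaN \<xi> = PN e N (S (real k * \<tau>) (the_inv_into \<A> (Fk F S \<tau> k) \<xi>))"
  shows "\<exists>\<beta> :: real \<Rightarrow> real. \<forall>u. complete_trajectory S \<A> u \<longrightarrow>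
           (\<exists>K0. \<forall>K>K0. \<beta> K > 0 \<and>
              (\<forall>v. weak_sol lam e \<alpha>
                     (\<lambda>s n. f (v s) n + g n
                        - K * inner (PN e N (v s)
                              - ThetaN (\<lambda>j. if j < k then F (u (s - real k * \<tau> + real j * \<tau>)) else 0))
                            (e n)) v
                   \<longrightarrow> (\<forall>t\<ge>0. norm (v t - u t) \<le> norm (v 0 - u 0) * exp (- \<beta> K * t))))"
proof -
  have lam_gt_0: "0 < lam n" for n using lam_pos lam_mono by (metis le0 monoD less_le_trans)
  have lam_min: "lam 0 \<le> lam n" for n using lam_mono by (simp add: monoD)
  obtain L' K0 :: real and \<beta> :: "real \<Rightarrow> real"
    where L': "L \<le> L'" "0 < L'" and "0 < K0" and rate: "\<And>K. K0 < K \<Longrightarrow> 0 < \<beta> K"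
      and margin: "\<And>K n. K0 < K \<Longrightarrow> \<beta> K \<le> lam n + (if n < N then K else 0) - L' * lam n powr \<alpha>"
    using nudging_rate[OF lam_gt_0 lam_mono alpha(1) less_imp_le[OF alpha(2)] N_gap] by blast
  show ?thesis
  proof (intro exI[of _ \<beta>] allI impI exI[of _ K0] conjI)
    fix u K assume u: "complete_trajectory S \<A> u" and "K0 < K"
    show "0 < \<beta> K" using \<open>K0 < K\<close> by (rule rate)
    have u_sol: "weak_sol lam e \<alpha> (\<lambda>s n. f (u s) n + g n) u"
      by (rule complete_trajectory_weak_sol[OF semigroup u])
    fix v and t :: real assume "weak_sol lam e \<alpha> (\<lambda>s n. f (v s) n + g n - K * inner (PN e N (v s)
        - ThetaN (\<lambda>j. if j < k then F (u (s - real k * \<tau> + real j * \<tau>)) else 0)) (e n)) v"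
      and "0 \<le> t"
    then have v: "weak_sol lam e \<alpha> (\<lambda>s n. f (v s) n + g n - K * inner (PN e N (v s) - PN e N (u s)) (e n)) v"
      using tau_pos by (simp add: delayed_observations_recover_projection[OF u F_inj _ ThetaN_ext])
    have Hs: "v s \<in> Hs lam e \<alpha>" "u s \<in> Hs lam e \<alpha>" if "0 < s" for s
      using v u_sol that by (auto simp: weak_sol_def)
    show "norm (v t - u t) \<le> norm (v 0 - u 0) * exp (- \<beta> K * t)"
      by (rule weak_sol_exponential_decay[where L=L' and C="2 * C", OF basis lam_gt_0 lam_min _
            weak_sol_nudged_difference[OF basis v u_sol] _ _ _ _ margin[OF \<open>K0 < K\<close>]])
         (use alpha L' \<open>0 < K0\<close> \<open>K0 < K\<close> rate[OF \<open>K0 < K\<close>] \<open>0 \<le> t\<close> Hs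
            nonlinearity_difference_bounds[OF f_maps f_bdd f_lip \<open>L \<le> L'\<close>] in auto)
  qed
qed

end
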